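(* Consider a deterministic two-player discounted game on $\vec{\mathcal G}=([n],E)$, $m=|E|$. Fix $r\in\mathbb R^m$ and $\gamma\in(0,1)$, and let $\tilde r\in\mathbb R^m$, $\varepsilon>0$ satisfy $\|r-\tilde r\|_\infty\le\varepsilon$. Put $\delta=\frac{2\varepsilon}{(1-\gamma)\gamma^n}$. Let $(\sigma,\tau)$ be any pair of policies and $E^{\sigma,\tau}$ the set of edges they use. Define $r^{(1)},r^{(2)}\in\mathbb R^m$ by $r^{(1)}_{ij}=r^{(2)}_{ij}=\tilde r_{ij}$ if $(i,j)\in E^{\sigma,\tau}$, and $r^{(1)}_{ij}=\tilde r_{ij}-\delta$, $r^{(2)}_{ij}=\tilde r_{ij}+\delta$ otherwise. If $(\sigma,\tau)$ is a pair of optimal policies in the discounted games with discount factor $\gamma$ and weights $r^{(1)}$ and $r^{(2)}$, then $(\sigma,\tau)$ is a pair of optimal policies in the discounted game with discount factor $\gamma$ and weights $r$.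
   Context: The graph has no multiple edges, each vertex has an outgoing edge, $[n]=V_{\max}\uplus V_{\min}$, weights $r\in\mathbb R^E$. Policies $\sigma:V_{\max}\to[n]$, $\tau:V_{\min}\to[n]$ with $(i,\sigma(i)),(i,\tau(i))\in E$; $E^{\sigma,\tau}=\{(i,\sigma(i))\}\cup\{(i,\tau(i))\}$. Discounted game with factor $\gamma$: along the play $i_0,i_1,\dots$ Max receives $(1-\gamma)\sum_{t\ge0}\gamma^t r_{i_ti_{t+1}}$ (Max maximizes, Min minimizes). Its value $\lambda^{(\gamma)}\in\mathbb R^n$ is the unique solution of $\lambda^{(\gamma)}_i=\max_{(i,j)\in E}\{(1-\gamma)r_{ij}+\gamma\lambda^{(\gamma)}_j\}$ for $i\in V_{\max}$ and $\lambda^{(\gamma)}_i=\min_{(i,j)\in E}\{(1-\gamma)r_{ij}+\gamma\lambda^{(\gamma)}_j\}$ for $i\in V_{\min}$; a pair $(\sigma,\tau)$ is optimal iff $\sigma(i)$ attains the maximum for every $i\in V_{\max}$ and $\tau(i)$ attains the minimum for every $i\in V_{\min}$ (equivalently, each policy guarantees the value from every initial state against any policy of the opponent). *)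

theory Defs
  imports Complex_Main
begin

text \<open>Game graph: vertices [n] = {1..n}, edge set E, Max vertices Vmax,
  Min vertices [n] - Vmax. Weights are functions on pairs (only values on E matter).\<close>

definition game_graph :: "nat \<Rightarrow> (nat \<times> nat) set \<Rightarrow> nat set \<Rightarrow> bool" where
  "game_graph n E Vmax \<longleftrightarrow> E \<subseteq> {1..n} \<times> {1..n} \<and> Vmax \<subseteq> {1..n}
     \<and> (\<forall>i\<in>{1..n}. \<exists>j. (i, j) \<in> E)"

definition succ_vals :: "(nat \<times> nat) set \<Rightarrow> (nat \<times> nat \<Rightarrow> real) \<Rightarrow> real \<Rightarrow> (nat \<Rightarrow> real) \<Rightarrow> nat \<Rightarrow> real set" where
  "succ_vals E r \<gamma> lam i = {(1 - \<gamma>) * r (i, j) + \<gamma> * lam j | j. (i, j) \<in> E}"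

definition solves_bellman :: "nat \<Rightarrow> (nat \<times> nat) set \<Rightarrow> nat set \<Rightarrow> (nat \<times> nat \<Rightarrow> real) \<Rightarrow> real \<Rightarrow> (nat \<Rightarrow> real) \<Rightarrow> bool" where
  "solves_bellman n E Vmax r \<gamma> lam \<longleftrightarrow>
     (\<forall>i\<in>Vmax. lam i = Max (succ_vals E r \<gamma> lam i)) \<and>
     (\<forall>i\<in>{1..n} - Vmax. lam i = Min (succ_vals E r \<gamma> lam i))"

text \<open>The value of the discounted game: the unique solution of the Bellman equations
  (normalised to 0 outside the vertex set [n]).\<close>
definition disc_value :: "nat \<Rightarrow> (nat \<times> nat) set \<Rightarrow> nat set \<Rightarrow> (nat \<times> nat \<Rightarrow> real) \<Rightarrow> real \<Rightarrow> nat \<Rightarrow> real" where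
  "disc_value n E Vmax r \<gamma> = (THE lam. solves_bellman n E Vmax r \<gamma> lam \<and> (\<forall>i. i \<notin> {1..n} \<longrightarrow> lam i = 0))"

definition is_policy_pair :: "nat \<Rightarrow> (nat \<times> nat) set \<Rightarrow> nat set \<Rightarrow> (nat \<Rightarrow> nat) \<Rightarrow> (nat \<Rightarrow> nat) \<Rightarrow> bool" where
  "is_policy_pair n E Vmax \<sigma> \<tau> \<longleftrightarrow> (\<forall>i\<in>Vmax. (i, \<sigma> i) \<in> E) \<and> (\<forall>i\<in>{1..n} - Vmax. (i, \<tau> i) \<in> E)"

definition policy_edges :: "nat \<Rightarrow> nat set \<Rightarrow> (nat \<Rightarrow> nat) \<Rightarrow> (nat \<Rightarrow> nat) \<Rightarrow> (nat \<times> nat) set" where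
  "policy_edges n Vmax \<sigma> \<tau> = {(i, \<sigma> i) | i. i \<in> Vmax} \<union> {(i, \<tau> i) | i. i \<in> {1..n} - Vmax}"

definition optimal_pair :: "nat \<Rightarrow> (nat \<times> nat) set \<Rightarrow> nat set \<Rightarrow> (nat \<times> nat \<Rightarrow> real) \<Rightarrow> real \<Rightarrow> (nat \<Rightarrow> nat) \<Rightarrow> (nat \<Rightarrow> nat) \<Rightarrow> bool" where
  "optimal_pair n E Vmax r \<gamma> \<sigma> \<tau> \<longleftrightarrow>
     (let lam = disc_value n E Vmax r \<gamma> in
       (\<forall>i\<in>Vmax. (1 - \<gamma>) * r (i, \<sigma> i) + \<gamma> * lam (\<sigma> i) = Max (succ_vals E r \<gamma> lam i)) \<and>
       (\<forall>i\<in>{1..n} - Vmax. (1 - \<gamma>) * r (i, \<tau> i) + \<gamma> * lam (\<tau> i) = Min (succ_vals E r \<gamma> lam i)))"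

end

theory Submission
  imports Defs "HOL-Probability.Discrete_Topology"
begin

text \<open>Both perturbed games \<open>r1\<close>, \<open>r2\<close> have the same value \<open>lv\<close>: their weights agree with
  \<open>rt\<close> on the edges of \<open>(\<sigma>, \<tau>)\<close>, so \<open>lv\<close> is the value of the one-player game on those edges
  with weights \<open>rt\<close>. Optimality in the \<open>r2\<close>-game says that every Max alternative \<open>j \<noteq> \<sigma> i\<close>
  falls short of \<open>lv i\<close> by at least \<open>(1 - \<gamma>) \<delta> \<ge> 2\<epsilon>\<close>, and the \<open>r1\<close>-game gives the same
  margin for Min. Bellman operators are \<open>\<gamma>\<close>-contractions in the sup norm, so changing the
  weights by at most \<open>\<epsilon>\<close> moves the value of the one-player game by at most \<open>\<epsilon>\<close>, and each
  one-step value by at most \<open>\<epsilon>\<close> as well; the margin \<open>2\<epsilon>\<close> absorbs both, and the value of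
  \<open>(\<sigma>, \<tau>)\<close> for \<open>r\<close> satisfies the Bellman equations of the full game with \<open>\<sigma>\<close>, \<open>\<tau>\<close> attaining
  the extrema.\<close>

lemma succ_vals_eq_image:
  "succ_vals E r \<gamma> lam i = (\<lambda>j. (1 - \<gamma>) * r (i, j) + \<gamma> * lam j) ` {j. (i, j) \<in> E}"
  by (auto simp: succ_vals_def)

lemma game_graph_edge_in_vertices:
  "game_graph n E Vmax \<Longrightarrow> (i, j) \<in> E \<Longrightarrow> i \<in> {1..n} \<and> j \<in> {1..n}"
  unfolding game_graph_def by auto

lemma game_graph_Max_vertices_subset: "game_graph n E Vmax \<Longrightarrow> Vmax \<subseteq> {1..n}"
  unfolding game_graph_def by simp

lemma game_graph_finite_successors: "game_graph n E Vmax \<Longrightarrow> finite {j. (i, j) \<in> E}"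
  by (rule finite_subset[of _ "{1..n}"]) (auto dest: game_graph_edge_in_vertices)

lemma game_graph_successors_nonempty:
  "game_graph n E Vmax \<Longrightarrow> i \<in> {1..n} \<Longrightarrow> {j. (i, j) \<in> E} \<noteq> {}"
  unfolding game_graph_def by blast

lemma finite_succ_vals: "game_graph n E Vmax \<Longrightarrow> finite (succ_vals E r \<gamma> lam i)"
  by (simp add: succ_vals_eq_image game_graph_finite_successors)

lemma Max_image_dist_le:
  fixes f g :: "'a \<Rightarrow> real"
  assumes "finite S" "S \<noteq> {}" "\<forall>j\<in>S. \<bar>f j - g j\<bar> \<le> c"
  shows "\<bar>Max (f ` S) - Max (g ` S)\<bar> \<le> c"
proof -
  have "Max (f ` S) \<le> Max (g ` S) + c" if "\<forall>j\<in>S. \<bar>f j - g j\<bar> \<le> c" for f g :: "'a \<Rightarrow> real"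
  proof -
    have "Max (f ` S) \<in> f ` S" using assms(1,2) by simp
    then obtain j where "j \<in> S" "Max (f ` S) = f j" by auto
    moreover have "g j \<le> Max (g ` S)" using assms(1) \<open>j \<in> S\<close> by simp
    ultimately show ?thesis using that by fastforce
  qed
  from this[OF assms(3)] this[of g f] assms(3) show ?thesis
    by (simp add: abs_minus_commute abs_le_iff)
qed

lemma Min_image_dist_le:
  fixes f g :: "'a \<Rightarrow> real"
  assumes "finite S" "S \<noteq> {}" "\<forall>j\<in>S. \<bar>f j - g j\<bar> \<le> c"
  shows "\<bar>Min (f ` S) - Min (g ` S)\<bar> \<le> c"
proof -
  have "Min (f ` S) \<le> Min (g ` S) + c" if "\<forall>j\<in>S. \<bar>f j - g j\<bar> \<le> c" for f g :: "'a \<Rightarrow> real"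
  proof -
    have "Min (g ` S) \<in> g ` S" using assms(1,2) by simp
    then obtain j where "j \<in> S" "Min (g ` S) = g j" by auto
    moreover have "Min (f ` S) \<le> f j" using assms(1) \<open>j \<in> S\<close> by simp
    ultimately show ?thesis using that by fastforce
  qed
  from this[OF assms(3)] this[of g f] assms(3) show ?thesis
    by (simp add: abs_minus_commute abs_le_iff)
qed

lemma max_le_of_self_bound:
  fixes f :: "'a \<Rightarrow> real"
  assumes "finite S" "\<gamma> < 1" "\<forall>i\<in>S. f i \<le> (1 - \<gamma>) * a + \<gamma> * Max (f ` S)"
  shows "\<forall>i\<in>S. f i \<le> a"
proof (cases "S = {}")
  case False
  then have "Max (f ` S) \<in> f ` S" using assms(1) by simp
  then obtain i0 where "i0 \<in> S" "Max (f ` S) = f i0" by auto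
  with assms(3) have "(1 - \<gamma>) * f i0 \<le> (1 - \<gamma>) * a" by (auto simp: algebra_simps)
  with assms(2) have "Max (f ` S) \<le> a" using \<open>Max (f ` S) = f i0\<close> by simp
  with assms(1) show ?thesis by (meson Max_ge finite_imageI image_eqI order_trans)
qed simp

definition bellman_op ::
    "nat \<Rightarrow> (nat \<times> nat) set \<Rightarrow> nat set \<Rightarrow> (nat \<times> nat \<Rightarrow> real) \<Rightarrow> real \<Rightarrow> (nat \<Rightarrow> real) \<Rightarrow> nat \<Rightarrow> real"
  where "bellman_op n E Vmax r \<gamma> lam i =
    (if i \<in> Vmax then Max (succ_vals E r \<gamma> lam i)
     else if i \<in> {1..n} then Min (succ_vals E r \<gamma> lam i) else 0)"

lemma solves_bellman_iff_bellman_op: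
  assumes "game_graph n E Vmax"
  shows "solves_bellman n E Vmax r \<gamma> lam \<longleftrightarrow> (\<forall>i\<in>{1..n}. lam i = bellman_op n E Vmax r \<gamma> lam i)"
  using game_graph_Max_vertices_subset[OF assms]
  unfolding solves_bellman_def bellman_op_def by auto

lemma convex_comb_dist_le:
  fixes a a' x x' :: real
  assumes "0 \<le> \<gamma>" "\<gamma> \<le> 1" "\<bar>a - a'\<bar> \<le> \<epsilon>" "\<bar>x - x'\<bar> \<le> D"
  shows "\<bar>((1 - \<gamma>) * a + \<gamma> * x) - ((1 - \<gamma>) * a' + \<gamma> * x')\<bar> \<le> (1 - \<gamma>) * \<epsilon> + \<gamma> * D"
proof -
  have "\<bar>((1 - \<gamma>) * a + \<gamma> * x) - ((1 - \<gamma>) * a' + \<gamma> * x')\<bar> = \<bar>(1 - \<gamma>) * (a - a') + \<gamma> * (x - x')\<bar>"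
    by (simp add: algebra_simps)
  also have "\<dots> \<le> \<bar>(1 - \<gamma>) * (a - a')\<bar> + \<bar>\<gamma> * (x - x')\<bar>"
    by (rule abs_triangle_ineq)
  also have "\<dots> = (1 - \<gamma>) * \<bar>a - a'\<bar> + \<gamma> * \<bar>x - x'\<bar>"
    using assms(1,2) by (simp add: abs_mult)
  also have "\<dots> \<le> (1 - \<gamma>) * \<epsilon> + \<gamma> * D"
    using assms by (intro add_mono mult_left_mono) auto
  finally show ?thesis .
qed

lemma bellman_op_dist_le:
  assumes G: "game_graph n E Vmax" and "0 \<le> \<gamma>" "\<gamma> \<le> 1" and i: "i \<in> {1..n}"
    and r: "\<forall>e\<in>E. \<bar>r e - r' e\<bar> \<le> \<epsilon>" and lam: "\<forall>j\<in>{1..n}. \<bar>lam j - mu j\<bar> \<le> D"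
  shows "\<bar>bellman_op n E Vmax r \<gamma> lam i - bellman_op n E Vmax r' \<gamma> mu i\<bar> \<le> (1 - \<gamma>) * \<epsilon> + \<gamma> * D"
proof -
  let ?S = "{j. (i, j) \<in> E}"
  have "\<forall>j\<in>?S. \<bar>((1 - \<gamma>) * r (i, j) + \<gamma> * lam j) - ((1 - \<gamma>) * r' (i, j) + \<gamma> * mu j)\<bar>
      \<le> (1 - \<gamma>) * \<epsilon> + \<gamma> * D"
    using r lam game_graph_edge_in_vertices[OF G] assms(2,3) by (auto intro!: convex_comb_dist_le)
  from Max_image_dist_le[OF _ _ this] Min_image_dist_le[OF _ _ this] show ?thesis
    using i game_graph_finite_successors[OF G] game_graph_successors_nonempty[OF G i]
    unfolding bellman_op_def succ_vals_eq_image by simp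
qed

lemma bellman_solutions_dist_le:
  assumes G: "game_graph n E Vmax" and "0 \<le> \<gamma>" "\<gamma> < 1"
    and "solves_bellman n E Vmax r \<gamma> lam" "solves_bellman n E Vmax r' \<gamma> mu"
    and "\<forall>e\<in>E. \<bar>r e - r' e\<bar> \<le> \<epsilon>"
  shows "\<forall>i\<in>{1..n}. \<bar>lam i - mu i\<bar> \<le> \<epsilon>"
proof (rule max_le_of_self_bound)
  let ?d = "\<lambda>i. \<bar>lam i - mu i\<bar>"
  have "\<forall>j\<in>{1..n}. ?d j \<le> Max (?d ` {1..n})" by simp
  then show "\<forall>i\<in>{1..n}. ?d i \<le> (1 - \<gamma>) * \<epsilon> + \<gamma> * Max (?d ` {1..n})"
    using bellman_op_dist_le[OF G] assms solves_bellman_iff_bellman_op[OF G] by simp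
qed (use assms in auto)

lemma bellman_solution_unique:
  assumes G: "game_graph n E Vmax" and "0 \<le> \<gamma>" "\<gamma> < 1"
    and "solves_bellman n E Vmax r \<gamma> lam" "\<forall>i. i \<notin> {1..n} \<longrightarrow> lam i = 0"
    and "solves_bellman n E Vmax r \<gamma> mu" "\<forall>i. i \<notin> {1..n} \<longrightarrow> mu i = 0"
  shows "lam = mu"
proof
  fix i
  show "lam i = mu i"
    using bellman_solutions_dist_le[OF G assms(2,3,4,6), of 0] assms(5,7)
    by (cases "i \<in> {1..n}") auto
qed

text \<open>Banach's fixed point theorem, applied to \<open>bellman_op\<close> on the complete space of
  bounded functions on \<open>\<nat>\<close> with the discrete topology.\<close>

lemma bellman_solution_exists:
  assumes G: "game_graph n E Vmax" and "0 \<le> \<gamma>" "\<gamma> < 1"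
  shows "\<exists>lam. solves_bellman n E Vmax r \<gamma> lam \<and> (\<forall>i. i \<notin> {1..n} \<longrightarrow> lam i = 0)"
proof -
  let ?T = "\<lambda>f k. bellman_op n E Vmax r \<gamma> (\<lambda>i. f (discrete i)) (of_discrete k)"
  have T_bcontfun: "?T f \<in> bcontfun" for f
  proof -
    have "range (?T f) \<subseteq> insert 0 (bellman_op n E Vmax r \<gamma> (\<lambda>i. f (discrete i)) ` {1..n})"
      using game_graph_Max_vertices_subset[OF G] by (auto simp: bellman_op_def)
    then have "finite (range (?T f))" by (rule finite_subset) simp
    then show ?thesis
      unfolding bcontfun_def by (simp add: finite_imp_bounded continuous_on_open_invariant open_discrete)
  qed
  define F :: "(nat discrete \<Rightarrow>\<^sub>C real) \<Rightarrow> (nat discrete \<Rightarrow>\<^sub>C real)"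
    where "F f = Bcontfun (?T (apply_bcontfun f))" for f
  have F_apply: "apply_bcontfun (F f) = ?T (apply_bcontfun f)" for f
    unfolding F_def using T_bcontfun by (simp add: Bcontfun_inverse)
  have "dist (F f) (F g) \<le> \<gamma> * dist f g" for f g
  proof (rule dist_bound)
    fix k
    have "\<forall>j\<in>{1..n}. \<bar>apply_bcontfun f (discrete j) - apply_bcontfun g (discrete j)\<bar> \<le> dist f g"
      using dist_bounded[of f _ g] by (simp add: dist_real_def)
    then show "dist (apply_bcontfun (F f) k) (apply_bcontfun (F g) k) \<le> \<gamma> * dist f g"
      using bellman_op_dist_le[OF G, of \<gamma> "of_discrete k" r r 0] assms(2,3)
        game_graph_Max_vertices_subset[OF G]
      by (cases "of_discrete k \<in> {1..n}") (auto simp: F_apply dist_real_def bellman_op_def)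
  qed
  then obtain f where "F f = f" using banach_fix_type[OF assms(2,3)] by blast
  then have f_fixed: "bellman_op n E Vmax r \<gamma> (\<lambda>i. f (discrete i)) i = f (discrete i)" for i
    using fun_cong[OF F_apply[of f], of "discrete i"] by (simp add: discrete_inverse)
  show ?thesis
  proof (intro exI conjI allI impI)
    show "solves_bellman n E Vmax r \<gamma> (\<lambda>i. f (discrete i))"
      using f_fixed by (simp add: solves_bellman_iff_bellman_op[OF G])
    fix i assume "i \<notin> {1..n}"
    moreover from this have "i \<notin> Vmax" using game_graph_Max_vertices_subset[OF G] by blast
    ultimately show "f (discrete i) = 0"
      using f_fixed[of i] by (simp add: bellman_op_def del: atLeastAtMost_iff)
  qed
qed

lemma disc_value_solves_bellman:
  assumes "game_graph n E Vmax" and "0 \<le> \<gamma>" "\<gamma> < 1"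
  shows "solves_bellman n E Vmax r \<gamma> (disc_value n E Vmax r \<gamma>)"
    and "\<forall>i. i \<notin> {1..n} \<longrightarrow> disc_value n E Vmax r \<gamma> i = 0"
proof -
  obtain lam where lam: "solves_bellman n E Vmax r \<gamma> lam \<and> (\<forall>i. i \<notin> {1..n} \<longrightarrow> lam i = 0)"
    using bellman_solution_exists[OF assms] by blast
  have "solves_bellman n E Vmax r \<gamma> (disc_value n E Vmax r \<gamma>)
      \<and> (\<forall>i. i \<notin> {1..n} \<longrightarrow> disc_value n E Vmax r \<gamma> i = 0)"
    unfolding disc_value_def
    by (rule theI[of _ lam]) (use lam bellman_solution_unique[OF assms] in blast)+
  then show "solves_bellman n E Vmax r \<gamma> (disc_value n E Vmax r \<gamma>)"
    and "\<forall>i. i \<notin> {1..n} \<longrightarrow> disc_value n E Vmax r \<gamma> i = 0" by auto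
qed

lemma disc_value_eqI:
  assumes "game_graph n E Vmax" and "0 \<le> \<gamma>" "\<gamma> < 1"
    and "solves_bellman n E Vmax r \<gamma> lam" "\<forall>i. i \<notin> {1..n} \<longrightarrow> lam i = 0"
  shows "disc_value n E Vmax r \<gamma> = lam"
  using bellman_solution_unique[OF assms(1-3) disc_value_solves_bellman[OF assms(1-3)] assms(4,5)] .

lemma policy_edges_subset:
  "is_policy_pair n E Vmax \<sigma> \<tau> \<Longrightarrow> policy_edges n Vmax \<sigma> \<tau> \<subseteq> E"
  unfolding is_policy_pair_def policy_edges_def by auto

lemma game_graph_policy_edges:
  assumes "game_graph n E Vmax" "is_policy_pair n E Vmax \<sigma> \<tau>"
  shows "game_graph n (policy_edges n Vmax \<sigma> \<tau>) Vmax"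
  using assms policy_edges_subset[OF assms(2)]
  unfolding game_graph_def is_policy_pair_def policy_edges_def
  by (auto; metis Diff_iff atLeastAtMost_iff)

lemma mem_policy_edges_iff:
  assumes "Vmax \<subseteq> {1..n}"
  shows "i \<in> Vmax \<Longrightarrow> (i, j) \<in> policy_edges n Vmax \<sigma> \<tau> \<longleftrightarrow> j = \<sigma> i"
    and "i \<in> {1..n} - Vmax \<Longrightarrow> (i, j) \<in> policy_edges n Vmax \<sigma> \<tau> \<longleftrightarrow> j = \<tau> i"
  using assms by (auto simp: policy_edges_def)

lemma solves_bellman_policy_edges_iff:
  assumes "Vmax \<subseteq> {1..n}"
  shows "solves_bellman n (policy_edges n Vmax \<sigma> \<tau>) Vmax w \<gamma> lam \<longleftrightarrow>
    (\<forall>i\<in>Vmax. lam i = (1 - \<gamma>) * w (i, \<sigma> i) + \<gamma> * lam (\<sigma> i)) \<and>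
    (\<forall>i\<in>{1..n} - Vmax. lam i = (1 - \<gamma>) * w (i, \<tau> i) + \<gamma> * lam (\<tau> i))"
proof -
  have "i \<in> Vmax \<Longrightarrow> succ_vals (policy_edges n Vmax \<sigma> \<tau>) w \<gamma> lam i
          = {(1 - \<gamma>) * w (i, \<sigma> i) + \<gamma> * lam (\<sigma> i)}"
       "i \<in> {1..n} - Vmax \<Longrightarrow> succ_vals (policy_edges n Vmax \<sigma> \<tau>) w \<gamma> lam i
          = {(1 - \<gamma>) * w (i, \<tau> i) + \<gamma> * lam (\<tau> i)}" for i
    using mem_policy_edges_iff[OF assms] by (auto simp: succ_vals_def)
  then show ?thesis unfolding solves_bellman_def by simp
qed

lemma optimal_pair_imp_solves_bellman_policy_edges:
  assumes G: "game_graph n E Vmax" and "0 \<le> \<gamma>" "\<gamma> < 1"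
    and opt: "optimal_pair n E Vmax w \<gamma> \<sigma> \<tau>"
    and agree: "\<forall>e\<in>policy_edges n Vmax \<sigma> \<tau>. w e = w' e"
  shows "solves_bellman n (policy_edges n Vmax \<sigma> \<tau>) Vmax w' \<gamma> (disc_value n E Vmax w \<gamma>)"
proof -
  have Vs: "Vmax \<subseteq> {1..n}" using game_graph_Max_vertices_subset[OF G] .
  have "(i, \<sigma> i) \<in> policy_edges n Vmax \<sigma> \<tau>" if "i \<in> Vmax" for i
    using mem_policy_edges_iff(1)[OF Vs that] by simp
  moreover have "(i, \<tau> i) \<in> policy_edges n Vmax \<sigma> \<tau>" if "i \<in> {1..n} - Vmax" for i
    using mem_policy_edges_iff(2)[OF Vs that] by simp
  ultimately show ?thesis
    unfolding solves_bellman_policy_edges_iff[OF Vs]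
    using disc_value_solves_bellman(1)[OF assms(1-3), of w] opt agree
    by (auto simp: solves_bellman_def optimal_pair_def Let_def)
qed

lemma disc_value_eq_policy_value:
  assumes G: "game_graph n E Vmax" and \<gamma>: "0 \<le> \<gamma>" "\<gamma> < 1"
    and pol: "is_policy_pair n E Vmax \<sigma> \<tau>" and opt: "optimal_pair n E Vmax w \<gamma> \<sigma> \<tau>"
    and agree: "\<forall>e\<in>policy_edges n Vmax \<sigma> \<tau>. w e = w' e"
  shows "disc_value n E Vmax w \<gamma> = disc_value n (policy_edges n Vmax \<sigma> \<tau>) Vmax w' \<gamma>"
  using bellman_solution_unique[OF game_graph_policy_edges[OF G pol] \<gamma>
      optimal_pair_imp_solves_bellman_policy_edges[OF G \<gamma> opt agree]
      disc_value_solves_bellman(2)[OF G \<gamma>]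
      disc_value_solves_bellman[OF game_graph_policy_edges[OF G pol] \<gamma>]] .

lemma optimal_pair_if_no_improving_edge:
  assumes G: "game_graph n E Vmax" and "0 \<le> \<gamma>" "\<gamma> < 1"
    and pol: "is_policy_pair n E Vmax \<sigma> \<tau>"
    and lam: "solves_bellman n (policy_edges n Vmax \<sigma> \<tau>) Vmax r \<gamma> lam"
      "\<forall>i. i \<notin> {1..n} \<longrightarrow> lam i = 0"
    and max: "\<And>i j. i \<in> Vmax \<Longrightarrow> (i, j) \<in> E \<Longrightarrow> (1 - \<gamma>) * r (i, j) + \<gamma> * lam j \<le> lam i"
    and min: "\<And>i j. i \<in> {1..n} - Vmax \<Longrightarrow> (i, j) \<in> E \<Longrightarrow> lam i \<le> (1 - \<gamma>) * r (i, j) + \<gamma> * lam j"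
  shows "optimal_pair n E Vmax r \<gamma> \<sigma> \<tau>"
proof -
  have Vs: "Vmax \<subseteq> {1..n}" using game_graph_Max_vertices_subset[OF G] .
  have eqs: "\<forall>i\<in>Vmax. lam i = (1 - \<gamma>) * r (i, \<sigma> i) + \<gamma> * lam (\<sigma> i)"
    "\<forall>i\<in>{1..n} - Vmax. lam i = (1 - \<gamma>) * r (i, \<tau> i) + \<gamma> * lam (\<tau> i)"
    using lam(1) unfolding solves_bellman_policy_edges_iff[OF Vs] by auto
  have Max_eq: "Max (succ_vals E r \<gamma> lam i) = lam i" if "i \<in> Vmax" for i
  proof (rule Max_eqI[OF finite_succ_vals[OF G]])
    show "lam i \<in> succ_vals E r \<gamma> lam i"
      using pol eqs that unfolding is_policy_pair_def succ_vals_def by auto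
  qed (use max that in \<open>auto simp: succ_vals_def\<close>)
  have Min_eq: "Min (succ_vals E r \<gamma> lam i) = lam i" if "i \<in> {1..n} - Vmax" for i
  proof (rule Min_eqI[OF finite_succ_vals[OF G]])
    show "lam i \<in> succ_vals E r \<gamma> lam i"
      using pol eqs that unfolding is_policy_pair_def succ_vals_def by auto
  qed (use min that in \<open>auto simp: succ_vals_def\<close>)
  have "solves_bellman n E Vmax r \<gamma> lam"
    unfolding solves_bellman_def using Max_eq Min_eq by auto
  then have "disc_value n E Vmax r \<gamma> = lam"
    using disc_value_eqI[OF assms(1-3)] lam(2) by blast
  with eqs Max_eq Min_eq show ?thesis
    unfolding optimal_pair_def Let_def by auto
qed

lemma solves_bellman_edge_le_Max_vertex:
  assumes "game_graph n E Vmax" "solves_bellman n E Vmax r \<gamma> lam" "i \<in> Vmax" "(i, j) \<in> E"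
  shows "(1 - \<gamma>) * r (i, j) + \<gamma> * lam j \<le> lam i"
  using assms finite_succ_vals[OF assms(1)] unfolding solves_bellman_def
  by (auto simp: succ_vals_def intro!: Max_ge)

lemma solves_bellman_Min_vertex_le_edge:
  assumes "game_graph n E Vmax" "solves_bellman n E Vmax r \<gamma> lam" "i \<in> {1..n} - Vmax" "(i, j) \<in> E"
  shows "lam i \<le> (1 - \<gamma>) * r (i, j) + \<gamma> * lam j"
  using assms finite_succ_vals[OF assms(1)] unfolding solves_bellman_def
  by (auto simp: succ_vals_def intro!: Min_le)

text \<open>One \<open>\<epsilon>\<close> of the margin pays for the change of the pair's value from \<open>rt\<close> to \<open>r\<close>,
  the other for the change of the one-step value of the deviating edge.\<close>

lemma optimal_pair_if_margin:
  assumes G: "game_graph n E Vmax" and "0 \<le> \<gamma>" "\<gamma> < 1"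
    and pol: "is_policy_pair n E Vmax \<sigma> \<tau>" and close: "\<forall>e\<in>E. \<bar>r e - rt e\<bar> \<le> \<epsilon>"
    and lv: "solves_bellman n (policy_edges n Vmax \<sigma> \<tau>) Vmax rt \<gamma> lv"
    and max_margin: "\<And>i j. i \<in> Vmax \<Longrightarrow> (i, j) \<in> E \<Longrightarrow> j \<noteq> \<sigma> i \<Longrightarrow>
      (1 - \<gamma>) * rt (i, j) + \<gamma> * lv j + 2 * \<epsilon> \<le> lv i"
    and min_margin: "\<And>i j. i \<in> {1..n} - Vmax \<Longrightarrow> (i, j) \<in> E \<Longrightarrow> j \<noteq> \<tau> i \<Longrightarrow>
      lv i + 2 * \<epsilon> \<le> (1 - \<gamma>) * rt (i, j) + \<gamma> * lv j"
  shows "optimal_pair n E Vmax r \<gamma> \<sigma> \<tau>"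
proof -
  let ?P = "policy_edges n Vmax \<sigma> \<tau>"
  define lw where "lw = disc_value n ?P Vmax r \<gamma>"
  have GP: "game_graph n ?P Vmax" using game_graph_policy_edges[OF G pol] .
  have Vs: "Vmax \<subseteq> {1..n}" using game_graph_Max_vertices_subset[OF G] .
  have lw: "solves_bellman n ?P Vmax r \<gamma> lw" "\<forall>i. i \<notin> {1..n} \<longrightarrow> lw i = 0"
    unfolding lw_def using disc_value_solves_bellman[OF GP assms(2,3)] by auto
  have lw_lv: "\<forall>i\<in>{1..n}. \<bar>lw i - lv i\<bar> \<le> \<epsilon>"
    using bellman_solutions_dist_le[OF GP assms(2,3) lw(1) lv] close policy_edges_subset[OF pol]
    by blast
  have step: "\<bar>((1 - \<gamma>) * r (i, j) + \<gamma> * lw j) - ((1 - \<gamma>) * rt (i, j) + \<gamma> * lv j)\<bar> \<le> \<epsilon>"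
    if "(i, j) \<in> E" for i j
    using convex_comb_dist_le[of \<gamma> "r (i, j)" "rt (i, j)" \<epsilon> "lw j" "lv j" \<epsilon>] assms(2,3) that close
      lw_lv game_graph_edge_in_vertices[OF G that] by (simp add: algebra_simps)
  have eqs: "\<forall>i\<in>Vmax. lw i = (1 - \<gamma>) * r (i, \<sigma> i) + \<gamma> * lw (\<sigma> i)"
    "\<forall>i\<in>{1..n} - Vmax. lw i = (1 - \<gamma>) * r (i, \<tau> i) + \<gamma> * lw (\<tau> i)"
    using lw(1) unfolding solves_bellman_policy_edges_iff[OF Vs] by auto
  show ?thesis
  proof (rule optimal_pair_if_no_improving_edge[OF G assms(2,3) pol lw])
    fix i j assume i: "i \<in> Vmax" and ij: "(i, j) \<in> E"
    show "(1 - \<gamma>) * r (i, j) + \<gamma> * lw j \<le> lw i"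
    proof (cases "j = \<sigma> i")
      case False
      then show ?thesis
        using max_margin[OF i ij] step[OF ij] lw_lv i Vs by fastforce
    qed (use eqs i in simp)
  next
    fix i j assume i: "i \<in> {1..n} - Vmax" and ij: "(i, j) \<in> E"
    show "lw i \<le> (1 - \<gamma>) * r (i, j) + \<gamma> * lw j"
    proof (cases "j = \<tau> i")
      case False
      then show ?thesis
        using min_margin[OF i ij] step[OF ij] lw_lv i by fastforce
    qed (use eqs i in simp)
  qed
qed

theorem mainTheorem19:
  fixes n :: nat and E :: "(nat \<times> nat) set" and Vmax :: "nat set"
    and r rt :: "nat \<times> nat \<Rightarrow> real" and \<gamma> \<epsilon> :: real and \<sigma> \<tau> :: "nat \<Rightarrow> nat"
  assumes "game_graph n E Vmax"
    and "0 < \<gamma>" and "\<gamma> < 1"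
    and "0 < \<epsilon>" and "\<forall>e\<in>E. \<bar>r e - rt e\<bar> \<le> \<epsilon>"
    and "is_policy_pair n E Vmax \<sigma> \<tau>"
    and "optimal_pair n E Vmax
           (\<lambda>e. if e \<in> policy_edges n Vmax \<sigma> \<tau> then rt e
                 else rt e - 2 * \<epsilon> / ((1 - \<gamma>) * \<gamma> ^ n)) \<gamma> \<sigma> \<tau>"
    and "optimal_pair n E Vmax
           (\<lambda>e. if e \<in> policy_edges n Vmax \<sigma> \<tau> then rt e
                 else rt e + 2 * \<epsilon> / ((1 - \<gamma>) * \<gamma> ^ n)) \<gamma> \<sigma> \<tau>"
  shows "optimal_pair n E Vmax r \<gamma> \<sigma> \<tau>"
proof -
  note G = assms(1) and pol = assms(6)
  have \<gamma>: "0 \<le> \<gamma>" "\<gamma> < 1" using assms(2,3) by auto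
  let ?P = "policy_edges n Vmax \<sigma> \<tau>"
  define \<delta> where "\<delta> = 2 * \<epsilon> / ((1 - \<gamma>) * \<gamma> ^ n)"
  define r1 where "r1 = (\<lambda>e. if e \<in> ?P then rt e else rt e - \<delta>)"
  define r2 where "r2 = (\<lambda>e. if e \<in> ?P then rt e else rt e + \<delta>)"
  define lv where "lv = disc_value n ?P Vmax rt \<gamma>"
  have "disc_value n E Vmax r1 \<gamma> = lv" "disc_value n E Vmax r2 \<gamma> = lv"
    using disc_value_eq_policy_value[OF G \<gamma> pol] assms(7,8)
    unfolding lv_def r1_def r2_def \<delta>_def by auto
  then have lv_r: "solves_bellman n E Vmax r1 \<gamma> lv" "solves_bellman n E Vmax r2 \<gamma> lv"
    using disc_value_solves_bellman(1)[OF G \<gamma>] by metis+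
  have lv: "solves_bellman n ?P Vmax rt \<gamma> lv"
    unfolding lv_def using disc_value_solves_bellman(1)[OF game_graph_policy_edges[OF G pol] \<gamma>] .
  have "(1 - \<gamma>) * \<delta> = 2 * \<epsilon> / \<gamma> ^ n"
    using assms(2,3) unfolding \<delta>_def by (simp add: field_simps)
  also have "\<dots> \<ge> 2 * \<epsilon>"
    using assms(2,3,4) by (simp add: field_simps power_le_one)
  finally have margin: "2 * \<epsilon> \<le> (1 - \<gamma>) * \<delta>" .
  show ?thesis
  proof (rule optimal_pair_if_margin[OF G \<gamma> pol assms(5) lv])
    fix i j assume "i \<in> Vmax" "(i, j) \<in> E" "j \<noteq> \<sigma> i"
    then show "(1 - \<gamma>) * rt (i, j) + \<gamma> * lv j + 2 * \<epsilon> \<le> lv i"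
      using solves_bellman_edge_le_Max_vertex[OF G lv_r(2)] margin game_graph_Max_vertices_subset[OF G]
      by (force simp: r2_def policy_edges_def algebra_simps)
  next
    fix i j assume "i \<in> {1..n} - Vmax" "(i, j) \<in> E" "j \<noteq> \<tau> i"
    then show "lv i + 2 * \<epsilon> \<le> (1 - \<gamma>) * rt (i, j) + \<gamma> * lv j"
      using solves_bellman_Min_vertex_le_edge[OF G lv_r(1)] margin
      by (force simp: r1_def policy_edges_def algebra_simps)
  qed
qed

end
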